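(* Let $\mathbb{F}$ be a field. Every directed tensor-labeled hypergraph $\mathcal{H}=(Q_0,Q_1,\beta)$ with $\delta(\mathcal{H})\ge1$ satisfies $|Q_1|\ge2$ and $|V_{\mathrm{macro}}|\ge3$.
   Context: $T(\mathbb{F}^{Q_0})=\bigoplus_{k\ge0}(\mathbb{F}^{Q_0})^{\otimes k}$. A directed tensor-labeled hypergraph is $\mathcal{H}=(Q_0,Q_1,\beta)$ ($Q_0,Q_1$ finite) with $\beta:\mathbb{F}^{Q_1}\to T(\mathbb{F}^{Q_0})\times T(\mathbb{F}^{Q_0})$ linear, $\beta(\mathbf{1}_e)=(A_e,B_e)$. $V_{\mathrm{macro}}=\{A_e\}\cup\{B_e\}$ (a set); $B_{\mathrm{macro}}:\mathbb{F}^{Q_1}\to\mathbb{F}^{V_{\mathrm{macro}}}$, $\mathbf{1}_e\mapsto\mathbf{1}_{B_e}-\mathbf{1}_{A_e}$; $\hat\phi:\mathbb{F}^{V_{\mathrm{macro}}}\to T(\mathbb{F}^{Q_0})$, $\mathbf{1}_w\mapsto w$; $\delta(\mathcal{H})=\dim(\mathrm{Im}B_{\mathrm{macro}}\cap\mathrm{Ker}\hat\phi)$. *)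

theory Defs
  imports Complex_Main "HOL-Library.Function_Algebras"
begin

text \<open>The tensor algebra T(F^Q0) is modelled as the free associative algebra on Q0:
  an element is a finitely supported function from words (lists) over Q0 to F;
  words of length k span (F^Q0)^{tensor k}.\<close>

definition tensor_elem :: "'v set \<Rightarrow> ('v list \<Rightarrow> 'f::field) \<Rightarrow> bool" where
  "tensor_elem Q0 t \<longleftrightarrow> finite {w. t w \<noteq> 0} \<and> (\<forall>w. t w \<noteq> 0 \<longrightarrow> set w \<subseteq> Q0)"

definition fscale :: "'f::field \<Rightarrow> ('a \<Rightarrow> 'f) \<Rightarrow> ('a \<Rightarrow> 'f)" where
  "fscale c x = (\<lambda>a. c * x a)"

lemma vector_space_fscale: "vector_space (fscale :: 'f::field \<Rightarrow> ('a \<Rightarrow> 'f) \<Rightarrow> _)"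
  by (unfold_locales) (simp_all add: fscale_def algebra_simps fun_eq_iff)

text \<open>A directed tensor-labeled hypergraph (Q0,Q1,beta): beta is linear, hence
  determined by beta(1_e) = (A e, B e) for e in Q1.\<close>
definition tl_hypergraph :: "'v set \<Rightarrow> 'e set \<Rightarrow> ('e \<Rightarrow> 'v list \<Rightarrow> 'f::field) \<Rightarrow> ('e \<Rightarrow> 'v list \<Rightarrow> 'f) \<Rightarrow> bool" where
  "tl_hypergraph Q0 Q1 A B \<longleftrightarrow> finite Q0 \<and> finite Q1 \<and>
     (\<forall>e\<in>Q1. tensor_elem Q0 (A e) \<and> tensor_elem Q0 (B e))"

definition V_macro :: "'e set \<Rightarrow> ('e \<Rightarrow> 'v list \<Rightarrow> 'f) \<Rightarrow> ('e \<Rightarrow> 'v list \<Rightarrow> 'f) \<Rightarrow> ('v list \<Rightarrow> 'f) set" where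
  "V_macro Q1 A B = A ` Q1 \<union> B ` Q1"

text \<open>B_macro : F^Q1 -> F^V_macro, 1_e |-> 1_{B e} - 1_{A e}, extended linearly.
  Elements of F^Q1 are functions 'e => F (only values on Q1 matter).\<close>
definition B_macro :: "'e set \<Rightarrow> ('e \<Rightarrow> 'v list \<Rightarrow> 'f::field) \<Rightarrow> ('e \<Rightarrow> 'v list \<Rightarrow> 'f)
     \<Rightarrow> ('e \<Rightarrow> 'f) \<Rightarrow> (('v list \<Rightarrow> 'f) \<Rightarrow> 'f)" where
  "B_macro Q1 A B c = (\<lambda>u. \<Sum>e\<in>Q1. c e * ((if u = B e then 1 else 0) - (if u = A e then 1 else 0)))"

definition phi_hat :: "('v list \<Rightarrow> 'f::field) set \<Rightarrow> (('v list \<Rightarrow> 'f) \<Rightarrow> 'f) \<Rightarrow> ('v list \<Rightarrow> 'f)" where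
  "phi_hat V x = (\<lambda>u. \<Sum>w\<in>V. x w * w u)"

definition delta :: "'e set \<Rightarrow> ('e \<Rightarrow> 'v list \<Rightarrow> 'f::field) \<Rightarrow> ('e \<Rightarrow> 'v list \<Rightarrow> 'f) \<Rightarrow> nat" where
  "delta Q1 A B = vector_space.dim (fscale :: 'f \<Rightarrow> (('v list \<Rightarrow> 'f) \<Rightarrow> 'f) \<Rightarrow> _)
     ({x. \<exists>c. x = B_macro Q1 A B c} \<inter> {x. phi_hat (V_macro Q1 A B) x = 0})"

end

theory Submission
  imports Defs
begin

text \<open>A nonzero vector \<open>x = B_macro c\<close> of \<open>Im B_macro \<inter> Ker phi_hat\<close> is supported on
  \<open>V_macro\<close>, its entries sum to zero (each column \<open>1_{B e} - 1_{A e}\<close> does), and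
  \<open>\<Sum>w. x w \<cdot> w = 0\<close>: a nontrivial affine dependency among the distinct tensors of
  \<open>V_macro\<close>. Two distinct points are affinely independent, so \<open>|V_macro| \<ge> 3\<close>; as every
  edge contributes at most two macro-vertices, \<open>|Q1| \<ge> 2\<close>.\<close>

lemma (in vector_space) ex_nonzero_if_dim_pos:
  assumes "0 < dim S"
  shows "\<exists>x\<in>S. x \<noteq> 0"
proof (rule ccontr)
  assume "\<not> (\<exists>x\<in>S. x \<noteq> 0)"
  then have "S \<subseteq> span {}" by (auto simp: span_empty)
  then have "dim S \<le> 0" using dim_le_card[of S "{}"] by simp
  with assms show False by simp
qed

lemma delta_pos_imp_nonzero_kernel_elem:
  assumes "delta Q1 A B \<ge> 1"
  obtains c where "B_macro Q1 A B c \<noteq> 0" and "phi_hat (V_macro Q1 A B) (B_macro Q1 A B c) = 0"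
proof -
  have "\<exists>x \<in> {x. \<exists>c. x = B_macro Q1 A B c} \<inter> {x. phi_hat (V_macro Q1 A B) x = 0}. x \<noteq> 0"
    by (rule vector_space.ex_nonzero_if_dim_pos[OF vector_space_fscale])
      (use assms in \<open>simp add: delta_def\<close>)
  with that show thesis by blast
qed

lemma B_macro_outside_V_macro:
  assumes "u \<notin> V_macro Q1 A B"
  shows "B_macro Q1 A B c u = 0"
  using assms unfolding V_macro_def B_macro_def by (intro sum.neutral ballI) auto

lemma ex_V_macro_nonzero_B_macro:
  assumes "B_macro Q1 A B c \<noteq> 0"
  obtains w where "w \<in> V_macro Q1 A B" and "B_macro Q1 A B c w \<noteq> 0"
  using assms B_macro_outside_V_macro by (metis ext zero_fun_def)

lemma sum_B_macro_V_macro: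
  assumes "finite Q1"
  shows "sum (B_macro Q1 A B c) (V_macro Q1 A B) = 0"
proof -
  let ?V = "V_macro Q1 A B"
  have fin: "finite ?V" using assms unfolding V_macro_def by simp
  have mem: "A e \<in> ?V" "B e \<in> ?V" if "e \<in> Q1" for e
    using that unfolding V_macro_def by auto
  have "sum (B_macro Q1 A B c) ?V
      = (\<Sum>e\<in>Q1. c e * ((\<Sum>u\<in>?V. if u = B e then 1 else 0) - (\<Sum>u\<in>?V. if u = A e then 1 else 0)))"
    unfolding B_macro_def
    by (subst sum.swap) (simp only: sum_distrib_left right_diff_distrib sum_subtractf)
  also have "\<dots> = 0"
    by (intro sum.neutral ballI) (simp add: fin mem)
  finally show ?thesis .
qed

lemma card_ge_3_if_affine_dependent:
  fixes V :: "('a list \<Rightarrow> 'f::field) set"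
  assumes "finite V" and "w \<in> V" and "x w \<noteq> 0"
    and "sum x V = 0" and "phi_hat V x = 0"
  shows "3 \<le> card V"
proof (rule ccontr)
  assume "\<not> 3 \<le> card V"
  moreover have "card V \<noteq> 0" using assms(1,2) by auto
  ultimately consider "card V = 1" | "card V = 2" by linarith
  then show False
  proof cases
    case 1
    then obtain a where "V = {a}" by (auto simp: card_1_singleton_iff)
    with assms(2-4) show False by simp
  next
    case 2
    then obtain a b where V: "V = {a, b}" and "a \<noteq> b" by (auto simp: card_2_iff)
    then obtain u where u: "a u \<noteq> b u" by (auto simp: fun_eq_iff)
    have xb: "x b = - x a" using assms(4) V \<open>a \<noteq> b\<close> by (simp add: eq_neg_iff_add_eq_0 add.commute)
    have "x a * a u + x b * b u = 0"
      using fun_cong[OF assms(5), of u] V \<open>a \<noteq> b\<close> by (simp add: phi_hat_def)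
    then have "x a * (a u - b u) = 0" using xb by (simp add: algebra_simps)
    then have "x a = 0" using u by simp
    with xb assms(2,3) V show False by auto
  qed
qed

lemma card_V_macro_le:
  assumes "finite Q1"
  shows "card (V_macro Q1 A B) \<le> 2 * card Q1"
proof -
  have "card (V_macro Q1 A B) \<le> card (A ` Q1) + card (B ` Q1)"
    unfolding V_macro_def by (rule card_Un_le)
  also have "\<dots> \<le> 2 * card Q1"
    using card_image_le[OF assms, of A] card_image_le[OF assms, of B] by linarith
  finally show ?thesis .
qed

theorem proposition4p9:
  fixes Q0 :: "'v set" and Q1 :: "'e set"
    and A B :: "'e \<Rightarrow> 'v list \<Rightarrow> 'f::field"
  assumes "tl_hypergraph Q0 Q1 A B"
    and "delta Q1 A B \<ge> 1"
  shows "card Q1 \<ge> 2 \<and> card (V_macro Q1 A B) \<ge> 3"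
proof -
  have fin: "finite Q1" using assms(1) unfolding tl_hypergraph_def by simp
  then have fin_V: "finite (V_macro Q1 A B)" unfolding V_macro_def by simp
  obtain c where nonzero: "B_macro Q1 A B c \<noteq> 0"
    and kernel: "phi_hat (V_macro Q1 A B) (B_macro Q1 A B c) = 0"
    using delta_pos_imp_nonzero_kernel_elem[OF assms(2)] .
  obtain w where "w \<in> V_macro Q1 A B" and "B_macro Q1 A B c w \<noteq> 0"
    using ex_V_macro_nonzero_B_macro[OF nonzero] .
  then have V3: "3 \<le> card (V_macro Q1 A B)"
    using card_ge_3_if_affine_dependent[OF fin_V _ _ sum_B_macro_V_macro[OF fin] kernel] by blast
  with card_V_macro_le[OF fin, of A B] have "2 \<le> card Q1" by linarith
  with V3 show ?thesis by simp
qed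

end
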